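(* Let $p_k$ be as defined in the context. In the Laurent polynomial ring $\mathbb Z[a^{\pm1},q^{\pm1}]$, for each nonzero integer $i$ set $\ell=|i|-1$ and $k=|i-\tfrac12|-\tfrac12$ (so $k=\ell=i-1$ if $i\ge1$, and $k=-i$, $\ell=-i-1$ if $i\le-1$), and define for $m\in\mathbb Z$ $$x_i(m)=\begin{cases}p_{m-k}\big(a^{-1}q^{-m-k},a^{-1}q^{-m-k+1},\dots,a^{-1}q^{-m+\ell}\big)&\text{if } m>k,\\ 0&\text{if } -\ell\le m\le k,\\ p_{-m-\ell}\big(aq^{m-\ell},aq^{m-\ell+1},\dots,aq^{m+k}\big)&\text{if } m<-\ell.\end{cases}$$ Then for all integers $m\ne n$, $1-aq^{m+n}$ divides $x_i(m)-x_i(n)$ in $\mathbb Z[a^{\pm1},q^{\pm1}]$.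
   Context: For integers $k\ge0$ and variables $\lambda_1,\dots,\lambda_r$, $p_k(\lambda_1,\dots,\lambda_r)=(1-\lambda_1)\cdots(1-\lambda_r)\sum_{\alpha\in\mathbb Z_{\ge0}^r,\,0\le|\alpha|<k}\lambda^\alpha$, with $\lambda^\alpha=\prod\lambda_j^{\alpha_j}$ and $|\alpha|=\sum\alpha_j$. (In the paper these are the fixed-point restrictions of module generators of $K^*_T(\Omega SU(2))$, with $K^0_T=\mathbb Z[a^{\pm1},q^{\pm1}]$ and the fixed points indexed by $\mathbb Z$; the stated divisibility is the GKM condition along the edge between fixed points $m$ and $n$.) *)

theory Defs
  imports "HOL-Library.Poly_Mapping" "HOL-Library.Product_Plus"
begin

text \<open>The Laurent polynomial ring Z[a^{+-1}, q^{+-1}] realised as the group ring of Z x Z: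
  finitely supported functions (int x int) to int with convolution product.
  The basis element at (e, f) is the Laurent monomial a^e q^f.\<close>
type_synonym laurent2 = "(int \<times> int) \<Rightarrow>\<^sub>0 int"

definition lmono :: "int \<Rightarrow> int \<Rightarrow> laurent2" where
  "lmono e f = Poly_Mapping.single (e, f) 1"

definition pk :: "nat \<Rightarrow> 'a::comm_ring_1 list \<Rightarrow> 'a" where
  "pk k lams = (\<Prod>l\<leftarrow>lams. 1 - l) *
     (\<Sum>\<alpha>\<in>{\<alpha>::nat list. length \<alpha> = length lams \<and> sum_list \<alpha> < k}.
        \<Prod>j<length lams. (lams ! j) ^ (\<alpha> ! j))"

definition ell_of :: "int \<Rightarrow> int" where
  "ell_of i = \<bar>i\<bar> - 1"

text \<open>k = |i - 1/2| - 1/2, i.e. i - 1 for i >= 1 and -i for i <= -1.\<close>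
definition k_of :: "int \<Rightarrow> int" where
  "k_of i = (if i \<ge> 1 then i - 1 else - i)"

definition xgen :: "int \<Rightarrow> int \<Rightarrow> laurent2" where
  "xgen i m = (let k = k_of i; l = ell_of i in
     if m > k then
       pk (nat (m - k)) (map (\<lambda>j. lmono (-1) (- m - k + int j)) [0..<nat (k + l + 1)])
     else if - l \<le> m then 0
     else
       pk (nat (- m - l)) (map (\<lambda>j. lmono 1 (m - l + int j)) [0..<nat (k + l + 1)]))"

end

theory Submission
  imports Defs
begin

text \<open>Modulo 1 - a q^(m+n) we may replace a by q^(-m-n). Then x_i(m) becomes p_K evaluated at
  r = k + l + 1 consecutive powers of q, and it vanishes when these powers include q^0 = 1.
  Up to reversing the list and replacing q by q^(-1), the residues of x_i(m) and x_i(n) are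
  p_K(t^C, ..., t^(C+r-1)) and p_C(t^K, ..., t^(K+r-1)) for natural numbers K and C, so it
  suffices that these agree. Expanding p_K through the complete homogeneous polynomials h_d,
  whose values at geometric progressions are Gaussian binomial coefficients, and telescoping
  with the Pascal recurrences turns p_K(t^C, ..., t^(C+r-1)) into a double sum over d < K and
  e < C whose summand is symmetric in d and e.\<close>

definition weak_compositions :: "nat \<Rightarrow> nat \<Rightarrow> nat list set" where
  "weak_compositions n d = {\<alpha>. length \<alpha> = n \<and> sum_list \<alpha> = d}"

definition list_monomial :: "'a::comm_ring_1 list \<Rightarrow> nat list \<Rightarrow> 'a" where
  "list_monomial xs \<alpha> = (\<Prod>j<length xs. (xs ! j) ^ (\<alpha> ! j))"

definition complete_hom :: "nat \<Rightarrow> 'a::comm_ring_1 list \<Rightarrow> 'a" where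
  "complete_hom d xs = (\<Sum>\<alpha>\<in>weak_compositions (length xs) d. list_monomial xs \<alpha>)"

lemma finite_weak_compositions: "finite (weak_compositions n d)"
proof (rule finite_subset)
  show "weak_compositions n d \<subseteq> {xs. set xs \<subseteq> {0..d} \<and> length xs = n}"
    unfolding weak_compositions_def using member_le_sum_list by fastforce
qed (simp add: finite_lists_length_eq)

lemma pk_eq_sum_complete_hom:
  "pk k xs = (\<Prod>x\<leftarrow>xs. 1 - x) * (\<Sum>d<k. complete_hom d xs)"
proof -
  have "{\<alpha>. length \<alpha> = length xs \<and> sum_list \<alpha> < k} = (\<Union>d<k. weak_compositions (length xs) d)"
    unfolding weak_compositions_def by auto
  then have "(\<Sum>\<alpha>\<in>{\<alpha>. length \<alpha> = length xs \<and> sum_list \<alpha> < k}. list_monomial xs \<alpha>)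
      = (\<Sum>d<k. complete_hom d xs)"
    unfolding complete_hom_def
    by (simp only:)
       (rule sum.UNION_disjoint, auto simp: finite_weak_compositions, auto simp: weak_compositions_def)
  then show ?thesis
    unfolding pk_def list_monomial_def by simp
qed

lemma complete_hom_Nil: "complete_hom d [] = (if d = 0 then 1 else 0)"
proof -
  have "weak_compositions 0 d = (if d = 0 then {[]} else {})"
    unfolding weak_compositions_def by auto
  then show ?thesis
    unfolding complete_hom_def list_monomial_def by simp
qed

lemma complete_hom_Cons: "complete_hom d (x # xs) = (\<Sum>a\<le>d. x ^ a * complete_hom (d - a) xs)"
proof -
  let ?S = "SIGMA a:{..d}. weak_compositions (length xs) (d - a)"
  have compositions_Cons: "weak_compositions (Suc (length xs)) d = (\<lambda>(a, \<beta>). a # \<beta>) ` ?S"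
  proof (rule set_eqI)
    fix \<alpha>
    show "\<alpha> \<in> weak_compositions (Suc (length xs)) d \<longleftrightarrow> \<alpha> \<in> (\<lambda>(a, \<beta>). a # \<beta>) ` ?S"
      unfolding weak_compositions_def by (cases \<alpha>) (auto simp: image_iff)
  qed
  have "inj_on (\<lambda>(a, \<beta>). a # \<beta>) ?S"
    by (auto simp: inj_on_def)
  then have "complete_hom d (x # xs) = (\<Sum>(a, \<beta>)\<in>?S. list_monomial (x # xs) (a # \<beta>))"
    unfolding complete_hom_def length_Cons compositions_Cons by (simp add: sum.reindex case_prod_unfold)
  also have "\<dots> = (\<Sum>(a, \<beta>)\<in>?S. x ^ a * list_monomial xs \<beta>)"
    unfolding list_monomial_def length_Cons prod.lessThan_Suc_shift by simp
  also have "\<dots> = (\<Sum>a\<le>d. x ^ a * complete_hom (d - a) xs)"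
    unfolding complete_hom_def
    by (simp add: sum.Sigma[symmetric] finite_weak_compositions sum_distrib_left)
  finally show ?thesis .
qed

lemma complete_hom_0: "complete_hom 0 xs = 1"
  by (induction xs) (simp_all add: complete_hom_Nil complete_hom_Cons)

lemma complete_hom_Cons_Suc:
  "complete_hom (Suc d) (x # xs) = complete_hom (Suc d) xs + x * complete_hom d (x # xs)"
  unfolding complete_hom_Cons sum.atMost_Suc_shift by (simp add: sum_distrib_left mult.assoc)

lemma complete_hom_scale: "complete_hom d (map ((*) c) xs) = c ^ d * complete_hom d xs"
proof (induction xs arbitrary: d)
  case Nil
  then show ?case by (simp add: complete_hom_Nil)
next
  case (Cons x xs)
  have "complete_hom d (map ((*) c) (x # xs)) = (\<Sum>a\<le>d. (c * x) ^ a * (c ^ (d - a) * complete_hom (d - a) xs))"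
    by (simp only: list.map complete_hom_Cons Cons.IH)
  also have "\<dots> = (\<Sum>a\<le>d. c ^ d * (x ^ a * complete_hom (d - a) xs))"
  proof (rule sum.cong)
    fix a
    assume "a \<in> {..d}"
    then have "c ^ d = c ^ a * c ^ (d - a)"
      by (simp add: power_add[symmetric])
    then show "(c * x) ^ a * (c ^ (d - a) * complete_hom (d - a) xs) = c ^ d * (x ^ a * complete_hom (d - a) xs)"
      by (simp add: algebra_simps)
  qed simp
  finally show ?case
    by (simp add: complete_hom_Cons sum_distrib_left)
qed

lemma list_monomial_rev:
  assumes "length \<alpha> = length xs"
  shows "list_monomial (rev xs) \<alpha> = list_monomial xs (rev \<alpha>)"
  unfolding list_monomial_def
  by (rule prod.reindex_bij_witness[where i="\<lambda>j. length xs - Suc j" and j="\<lambda>j. length xs - Suc j"])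
     (use assms in \<open>auto simp: rev_nth\<close>)

lemma complete_hom_rev: "complete_hom d (rev xs) = complete_hom d xs"
  unfolding complete_hom_def
proof (rule sum.reindex_bij_witness[where i=rev and j=rev])
  fix \<alpha>
  assume "\<alpha> \<in> weak_compositions (length (rev xs)) d"
  then show "list_monomial xs (rev \<alpha>) = list_monomial (rev xs) \<alpha>"
    by (simp add: weak_compositions_def list_monomial_rev)
qed (simp_all add: weak_compositions_def)

lemma complete_hom_snoc_Suc:
  "complete_hom (Suc d) (xs @ [x]) = complete_hom (Suc d) xs + x * complete_hom d (xs @ [x])"
  using complete_hom_Cons_Suc[of d x "rev xs"] complete_hom_rev[of _ "xs @ [x]"] complete_hom_rev[of _ xs]
  by simp

lemma pk_rev: "pk k (rev xs) = pk k xs"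
proof -
  have "(\<Prod>x\<leftarrow>rev xs. 1 - x) = (\<Prod>x\<leftarrow>xs. 1 - x)"
    by (metis prod_list.rev rev_map)
  then show ?thesis
    by (simp add: pk_eq_sum_complete_hom complete_hom_rev)
qed

lemma prod_list_map_upt: "(\<Prod>x\<leftarrow>map f [0..<r]. g x) = (\<Prod>j<r. g (f j))"
  using prod.distinct_set_conv_list[of "[0..<r]" "\<lambda>j. g (f j)"]
  by (simp add: atLeast0LessThan o_def)

text \<open>h_d(1, t, ..., t^(r-1)), the Gaussian binomial coefficient [r+d-1 choose d] in t.\<close>

definition q_multichoose :: "'a::comm_ring_1 \<Rightarrow> nat \<Rightarrow> nat \<Rightarrow> 'a" where
  "q_multichoose t r d = complete_hom d (map (\<lambda>j. t ^ j) [0..<r])"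

lemma q_multichoose_0_right: "q_multichoose t r 0 = 1"
  by (simp add: q_multichoose_def complete_hom_0)

lemma q_multichoose_Suc_Suc_first:
  "q_multichoose t (Suc r) (Suc d) = t ^ Suc d * q_multichoose t r (Suc d) + q_multichoose t (Suc r) d"
proof -
  have powers_Suc: "map (\<lambda>j. t ^ j) [0..<Suc r] = 1 # map ((*) t) (map (\<lambda>j. t ^ j) [0..<r])"
    by (simp add: map_Suc_upt[symmetric] upt_conv_Cons del: upt_Suc)
  show ?thesis
    unfolding q_multichoose_def powers_Suc complete_hom_Cons_Suc complete_hom_scale by simp
qed

lemma q_multichoose_Suc_Suc_last:
  "q_multichoose t (Suc r) (Suc d) = q_multichoose t r (Suc d) + t ^ r * q_multichoose t (Suc r) d"
  unfolding q_multichoose_def by (simp add: complete_hom_snoc_Suc)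

lemma q_multichoose_Suc_shift:
  "(1 - t ^ Suc d) * q_multichoose t r (Suc d) = (1 - t ^ r) * q_multichoose t (Suc r) d"
proof -
  have "(1 - t ^ Suc d) * q_multichoose t r (Suc d) - (1 - t ^ r) * q_multichoose t (Suc r) d
      = (q_multichoose t r (Suc d) + t ^ r * q_multichoose t (Suc r) d)
        - (t ^ Suc d * q_multichoose t r (Suc d) + q_multichoose t (Suc r) d)"
    by (simp add: algebra_simps)
  also have "\<dots> = 0"
    by (simp only: q_multichoose_Suc_Suc_first[symmetric] q_multichoose_Suc_Suc_last[symmetric] diff_self)
  finally show ?thesis
    by simp
qed

lemma q_multichoose_Suc_left:
  "(1 - t ^ (d + r)) * q_multichoose t r d = (1 - t ^ r) * q_multichoose t (Suc r) d"
proof (cases d)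
  case 0
  then show ?thesis by (simp add: q_multichoose_0_right)
next
  case (Suc e)
  have "(1 - t ^ r) * q_multichoose t (Suc r) (Suc e)
      = (1 - t ^ r) * t ^ Suc e * q_multichoose t r (Suc e) + (1 - t ^ r) * q_multichoose t (Suc r) e"
    by (simp only: q_multichoose_Suc_Suc_first distrib_left mult.assoc)
  also have "\<dots> = (1 - t ^ r) * t ^ Suc e * q_multichoose t r (Suc e) + (1 - t ^ Suc e) * q_multichoose t r (Suc e)"
    by (simp only: q_multichoose_Suc_shift)
  also have "\<dots> = (1 - t ^ (Suc e + r)) * q_multichoose t r (Suc e)"
    by (simp add: algebra_simps power_add)
  finally show ?thesis
    using Suc by simp
qed

lemma q_multichoose_Suc_right:
  "(1 - t ^ Suc d) * q_multichoose t r (Suc d) = (1 - t ^ (d + r)) * q_multichoose t r d"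
  by (simp only: q_multichoose_Suc_shift q_multichoose_Suc_left)

lemma prod_one_minus_consecutive_powers:
  assumes "1 \<le> r"
  shows "(\<Prod>j<r. 1 - t ^ (c + j)) = (1 - t ^ c) * q_multichoose t r c * (\<Prod>j\<in>{1..<r}. 1 - t ^ j)"
  using assms
proof (induction r rule: dec_induct)
  case base
  then show ?case
    by (simp add: q_multichoose_def complete_hom_Cons complete_hom_Nil)
next
  case (step n)
  have "(\<Prod>j<Suc n. 1 - t ^ (c + j))
      = (1 - t ^ c) * (\<Prod>j\<in>{1..<n}. 1 - t ^ j) * ((1 - t ^ (c + n)) * q_multichoose t n c)"
    using step.IH by (simp add: ac_simps)
  also have "\<dots> = (1 - t ^ c) * (\<Prod>j\<in>{1..<n}. 1 - t ^ j) * ((1 - t ^ n) * q_multichoose t (Suc n) c)"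
    by (simp only: q_multichoose_Suc_left)
  also have "\<dots> = (1 - t ^ c) * q_multichoose t (Suc n) c * (\<Prod>j\<in>{1..<Suc n}. 1 - t ^ j)"
    using step.hyps by (simp add: prod.atLeastLessThan_Suc ac_simps)
  finally show ?case .
qed

text \<open>The summand on the right is symmetric in d and e; this is what makes
  pk_consecutive_powers_swap hold.\<close>

lemma q_multichoose_telescope:
  "(1 - t ^ c) * q_multichoose t r c * t ^ (c * d)
    = (\<Sum>e<c. q_multichoose t r e * t ^ (e * d) * (t ^ d + t ^ e - 1 - t ^ (d + e + r)))"
proof -
  define f where "f e = (1 - t ^ e) * q_multichoose t r e * t ^ (e * d)" for e
  have "f (Suc e) - f e = q_multichoose t r e * t ^ (e * d) * (t ^ d + t ^ e - 1 - t ^ (d + e + r))" for e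
  proof -
    have "f (Suc e) = (1 - t ^ (e + r)) * q_multichoose t r e * t ^ (e * d) * t ^ d"
      unfolding f_def q_multichoose_Suc_right[symmetric] by (simp add: power_add algebra_simps)
    then show ?thesis
      unfolding f_def by (simp add: algebra_simps power_add)
  qed
  then show ?thesis
    using sum_lessThan_telescope[of f c] by (simp add: f_def)
qed

lemma pk_consecutive_powers:
  assumes "1 \<le> r"
  shows "pk k (map (\<lambda>j. t ^ (c + j)) [0..<r]) = (\<Prod>j\<in>{1..<r}. 1 - t ^ j) *
    (\<Sum>d<k. \<Sum>e<c. q_multichoose t r d * q_multichoose t r e * t ^ (e * d) * (t ^ d + t ^ e - 1 - t ^ (d + e + r)))"
proof -
  have shifted: "map (\<lambda>j. t ^ (c + j)) [0..<r] = map ((*) (t ^ c)) (map (\<lambda>j. t ^ j) [0..<r])"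
    by (simp add: power_add)
  have "complete_hom d (map (\<lambda>j. t ^ (c + j)) [0..<r]) = t ^ (c * d) * q_multichoose t r d" for d
    unfolding shifted complete_hom_scale q_multichoose_def by (simp add: power_mult)
  moreover have "(\<Prod>x\<leftarrow>map (\<lambda>j. t ^ (c + j)) [0..<r]. 1 - x)
      = (1 - t ^ c) * q_multichoose t r c * (\<Prod>j\<in>{1..<r}. 1 - t ^ j)"
    unfolding prod_list_map_upt by (rule prod_one_minus_consecutive_powers[OF assms])
  ultimately have "pk k (map (\<lambda>j. t ^ (c + j)) [0..<r])
      = (\<Prod>j\<in>{1..<r}. 1 - t ^ j) * (\<Sum>d<k. q_multichoose t r d * ((1 - t ^ c) * q_multichoose t r c * t ^ (c * d)))"
    unfolding pk_eq_sum_complete_hom by (simp add: sum_distrib_left ac_simps)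
  also have "\<dots> = (\<Prod>j\<in>{1..<r}. 1 - t ^ j) * (\<Sum>d<k. q_multichoose t r d *
      (\<Sum>e<c. q_multichoose t r e * t ^ (e * d) * (t ^ d + t ^ e - 1 - t ^ (d + e + r))))"
    by (simp only: q_multichoose_telescope)
  finally show ?thesis
    by (simp add: sum_distrib_left ac_simps)
qed

lemma pk_consecutive_powers_swap:
  assumes "1 \<le> r"
  shows "pk k (map (\<lambda>j. t ^ (c + j)) [0..<r]) = pk c (map (\<lambda>j. t ^ (k + j)) [0..<r])"
  unfolding pk_consecutive_powers[OF assms] by (subst sum.swap) (simp add: ac_simps)

lemma dvd_diff_mult_cong:
  fixes d :: "'a::comm_ring_1"
  assumes "d dvd a - b" and "d dvd c - e"
  shows "d dvd a * c - b * e"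
proof -
  have "a * c - b * e = a * (c - e) + (a - b) * e"
    by (simp add: algebra_simps)
  then show ?thesis
    using assms by simp
qed

lemma dvd_diff_power_cong:
  fixes d :: "'a::comm_ring_1"
  shows "d dvd a - b \<Longrightarrow> d dvd a ^ n - b ^ n"
  by (induction n) (simp_all add: dvd_diff_mult_cong)

lemma dvd_diff_prod_cong:
  fixes d :: "'a::comm_ring_1"
  shows "(\<And>x. x \<in> A \<Longrightarrow> d dvd f x - g x) \<Longrightarrow> d dvd prod f A - prod g A"
  by (induction A rule: infinite_finite_induct) (simp_all add: dvd_diff_mult_cong)

lemma dvd_diff_sum_cong:
  fixes d :: "'a::comm_ring_1"
  shows "(\<And>x. x \<in> A \<Longrightarrow> d dvd f x - g x) \<Longrightarrow> d dvd sum f A - sum g A"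
  by (simp add: sum_subtractf[symmetric] dvd_sum)

lemma dvd_diff_pk_cong:
  fixes d :: "'a::comm_ring_1"
  assumes "\<And>j. j < r \<Longrightarrow> d dvd f j - g j"
  shows "d dvd pk k (map f [0..<r]) - pk k (map g [0..<r])"
proof -
  have one_minus: "d dvd (1 - f j) - (1 - g j)" if "j < r" for j
    using dvd_minus_iff[of d "f j - g j"] assms[OF that] by simp
  have "d dvd (\<Prod>j<r. 1 - f j) - (\<Prod>j<r. 1 - g j)"
    by (rule dvd_diff_prod_cong, rule one_minus) simp
  moreover have "d dvd (\<Sum>\<alpha>\<in>A. \<Prod>j<r. f j ^ (\<alpha> ! j)) - (\<Sum>\<alpha>\<in>A. \<Prod>j<r. g j ^ (\<alpha> ! j))" for A
    by (intro dvd_diff_sum_cong dvd_diff_prod_cong dvd_diff_power_cong) (simp add: assms)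
  ultimately show ?thesis
    unfolding pk_def prod_list_map_upt by (simp add: dvd_diff_mult_cong)
qed

lemma lmono_mult: "lmono a b * lmono c e = lmono (a + c) (b + e)"
  by (simp add: lmono_def mult_single)

lemma lmono_0_0: "lmono 0 0 = 1"
  by (simp add: lmono_def zero_prod_def[symmetric])

lemma lmono_power: "lmono a b ^ n = lmono (int n * a) (int n * b)"
  by (induction n) (simp_all add: lmono_0_0 lmono_mult algebra_simps)

lemma lmono_inverse_a_cong:
  assumes "g = f + s"
  shows "(1 - lmono 1 s) dvd lmono (-1) f - lmono 0 g"
proof -
  have "lmono (-1) f - lmono 0 g = lmono (-1) f * (1 - lmono 1 s)"
    using assms by (simp add: algebra_simps lmono_mult)
  then show ?thesis
    by simp
qed

lemma lmono_a_cong: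
  assumes "g = f - s"
  shows "(1 - lmono 1 s) dvd lmono 1 f - lmono 0 g"
proof -
  have "lmono 1 f - lmono 0 g = - lmono 0 g * (1 - lmono 1 s)"
    using assms by (simp add: algebra_simps lmono_mult)
  then show ?thesis
    by (metis dvd_triv_right)
qed

definition qpowers :: "int \<Rightarrow> nat \<Rightarrow> laurent2 list" where
  "qpowers c r = map (\<lambda>j. lmono 0 (c + int j)) [0..<r]"

lemma qpowers_nonneg: "qpowers (int c) r = map (\<lambda>j. lmono 0 1 ^ (c + j)) [0..<r]"
  by (simp add: qpowers_def lmono_power)

lemma qpowers_neg: "qpowers (1 - int c - int r) r = rev (map (\<lambda>j. lmono 0 (-1) ^ (c + j)) [0..<r])"
  by (rule nth_equalityI) (simp_all add: qpowers_def lmono_power rev_nth algebra_simps)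

lemma pk_qpowers_swap: "1 \<le> r \<Longrightarrow> pk k (qpowers (int c) r) = pk c (qpowers (int k) r)"
  unfolding qpowers_nonneg by (rule pk_consecutive_powers_swap)

lemma pk_qpowers_neg_swap:
  "1 \<le> r \<Longrightarrow> pk k (qpowers (1 - int c - int r) r) = pk c (qpowers (1 - int k - int r) r)"
  unfolding qpowers_neg pk_rev by (rule pk_consecutive_powers_swap)

lemma pk_qpowers_zero:
  assumes "c \<le> 0" and "0 < c + int r"
  shows "pk k (qpowers c r) = 0"
proof -
  have "(\<Prod>x\<leftarrow>qpowers c r. 1 - x) = 0"
    unfolding qpowers_def prod_list_map_upt
    by (rule prod_zero) (use assms in \<open>auto intro!: bexI[where x="nat (- c)"] simp: lmono_0_0\<close>)
  then show ?thesis
    by (simp add: pk_def)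
qed

text \<open>The residue of x_i(m) modulo 1 - a q^(m+n), obtained by substituting q^(-m-n) for a;
  the parameters k and l stand for k_of i and ell_of i.\<close>

definition xgen_residue :: "int \<Rightarrow> int \<Rightarrow> int \<Rightarrow> int \<Rightarrow> laurent2" where
  "xgen_residue k l m n =
    (if m > k then pk (nat (m - k)) (qpowers (n - k) (nat (k + l + 1)))
     else if - l \<le> m then 0
     else pk (nat (- m - l)) (qpowers (- n - l) (nat (k + l + 1))))"

lemma xgen_cong_residue:
  "(1 - lmono 1 (m + n)) dvd xgen i m - xgen_residue (k_of i) (ell_of i) m n"
proof -
  consider "m > k_of i" | "\<not> m > k_of i" "- ell_of i \<le> m" | "\<not> m > k_of i" "m < - ell_of i"
    by linarith
  then show ?thesis
  proof cases
    case 1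
    then show ?thesis
      unfolding xgen_def xgen_residue_def qpowers_def Let_def
      by (simp, intro dvd_diff_pk_cong lmono_inverse_a_cong) simp
  next
    case 2
    then show ?thesis
      unfolding xgen_def xgen_residue_def by simp
  next
    case 3
    then show ?thesis
      unfolding xgen_def xgen_residue_def qpowers_def Let_def
      by (simp, intro dvd_diff_pk_cong lmono_a_cong) simp
  qed
qed

lemma xgen_residue_middle:
  assumes "0 \<le> k" "0 \<le> l" "- l \<le> m" "m \<le> k"
  shows "xgen_residue k l m n = 0" and "xgen_residue k l n m = 0"
proof -
  show "xgen_residue k l m n = 0"
    using assms by (simp add: xgen_residue_def)
  show "xgen_residue k l n m = 0"
    using assms by (auto simp: xgen_residue_def intro!: pk_qpowers_zero)
qed

lemma xgen_residue_swap:
  assumes "0 \<le> k" "0 \<le> l"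
  shows "xgen_residue k l m n = xgen_residue k l n m"
proof -
  have r: "1 \<le> nat (k + l + 1)"
    using assms by simp
  have upper: "xgen_residue k l m n = xgen_residue k l n m" if "k < m" "k < n" for m n
    using pk_qpowers_swap[OF r, of "nat (m - k)" "nat (n - k)"] that
    by (simp add: xgen_residue_def)
  have lower: "xgen_residue k l m n = xgen_residue k l n m" if "m < - l" "n < - l" for m n
    using pk_qpowers_swap[OF r, of "nat (- m - l)" "nat (- n - l)"] that assms
    by (simp add: xgen_residue_def)
  have across: "xgen_residue k l m n = xgen_residue k l n m" if "k < m" "n < - l" for m n
  proof -
    have starts: "1 - int (nat (m - k)) - int (nat (k + l + 1)) = - m - l"
      "1 - int (nat (- n - l)) - int (nat (k + l + 1)) = n - k"
      using that assms by simp_all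
    show ?thesis
      using pk_qpowers_neg_swap[OF r, of "nat (m - k)" "nat (- n - l)", unfolded starts] that assms
      by (simp add: xgen_residue_def)
  qed
  consider "- l \<le> m" "m \<le> k" | "- l \<le> n" "n \<le> k" | "k < m" "k < n" | "m < - l" "n < - l"
    | "k < m" "n < - l" | "m < - l" "k < n"
    by linarith
  then show ?thesis
    by cases (use assms xgen_residue_middle upper lower across in metis)+
qed

theorem mainTheorem9:
  fixes i m n :: int
  assumes "i \<noteq> 0" and "m \<noteq> n"
  shows "(1 - lmono 1 (m + n)) dvd (xgen i m - xgen i n)"
proof -
  have "0 \<le> k_of i" "0 \<le> ell_of i"
    using assms(1) by (simp_all add: k_of_def ell_of_def)
  then have "xgen_residue (k_of i) (ell_of i) m n = xgen_residue (k_of i) (ell_of i) n m"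
    by (rule xgen_residue_swap)
  moreover have "(1 - lmono 1 (m + n)) dvd xgen i n - xgen_residue (k_of i) (ell_of i) n m"
    using xgen_cong_residue[of n m i] by (simp add: add.commute)
  ultimately show ?thesis
    using dvd_diff[OF xgen_cong_residue[of m n i]] by fastforce
qed

end
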